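(* Let $n\ge0$ and let $\mathcal V$ be a variety with $n+2$ Gumm terms. (i) For every $q\ge1$, $\mathcal V$ is $(2^q+1,\,(2^{q+1}-2)n+2)$-modular. (ii) For every $q\ge2$, $\mathcal V$ is $(2^q-1,\,(2^{q+1}-2q-2)n+2)$-modular.
   Context: $\circ$ is relational composition, juxtaposition is intersection. For relations $X,Y$ and $m\ge1$, $X\circ_m Y$ denotes $X\circ Y\circ X\circ\cdots$ with $m$ factors. For $m\ge3$, a variety is $(m,k)$-modular if each of its algebras satisfies $\alpha(\beta\circ_m\alpha\gamma)\subseteq\alpha\beta\circ_k\alpha\gamma$ for all congruences $\alpha,\beta,\gamma$. A variety has $n+2$ Gumm terms if it has ternary terms $p,j_1,\dots,j_{n+1}$ satisfying: $x=j_i(x,y,x)$ for all $i$; $x=p(x,z,z)$; $p(x,x,z)=j_1(x,x,z)$; $j_i(x,z,z)=j_{i+1}(x,z,z)$ for odd $i\le n$; $j_i(x,x,z)=j_{i+1}(x,x,z)$ for even $i\le n$; $j_{n+1}(x,y,z)=z$. *)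

theory Defs
  imports Main
begin

type_synonym ('f, 'a) alg = "'a set \<times> ('f \<Rightarrow> 'a list \<Rightarrow> 'a)"

definition carrier :: "('f, 'a) alg \<Rightarrow> 'a set" where
  "carrier A = fst A"

definition ops :: "('f, 'a) alg \<Rightarrow> 'f \<Rightarrow> 'a list \<Rightarrow> 'a" where
  "ops A = snd A"

definition is_algebra :: "('f \<Rightarrow> nat) \<Rightarrow> ('f, 'a) alg \<Rightarrow> bool" where
  "is_algebra ar A \<longleftrightarrow> carrier A \<noteq> {} \<and>
     (\<forall>f xs. length xs = ar f \<and> set xs \<subseteq> carrier A \<longrightarrow> ops A f xs \<in> carrier A)"

datatype ('f, 'v) trm = Var 'v | Fun 'f "('f, 'v) trm list"

fun wf_trm :: "('f \<Rightarrow> nat) \<Rightarrow> ('f, 'v) trm \<Rightarrow> bool" where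
  "wf_trm ar (Var v) = True"
| "wf_trm ar (Fun f ts) = (length ts = ar f \<and> (\<forall>t\<in>set ts. wf_trm ar t))"

fun vars_trm :: "('f, 'v) trm \<Rightarrow> 'v set" where
  "vars_trm (Var v) = {v}"
| "vars_trm (Fun f ts) = (\<Union>t\<in>set ts. vars_trm t)"

fun eval :: "('f, 'a) alg \<Rightarrow> ('v \<Rightarrow> 'a) \<Rightarrow> ('f, 'v) trm \<Rightarrow> 'a" where
  "eval A \<rho> (Var v) = \<rho> v"
| "eval A \<rho> (Fun f ts) = ops A f (map (eval A \<rho>) ts)"

definition satisfies :: "('f, 'a) alg \<Rightarrow> ('f, nat) trm \<Rightarrow> ('f, nat) trm \<Rightarrow> bool" where
  "satisfies A s t \<longleftrightarrow> (\<forall>\<rho>. (\<forall>v. \<rho> v \<in> carrier A) \<longrightarrow> eval A \<rho> s = eval A \<rho> t)"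

text \<open>A variety (with carriers in type 'a): an equational class, i.e. the class
  of all algebras of the signature satisfying a set E of identities
  (equivalently, by Birkhoff's theorem, a class closed under H, S, P).\<close>
definition variety :: "('f \<Rightarrow> nat) \<Rightarrow> ('f, 'a) alg set \<Rightarrow> bool" where
  "variety ar V \<longleftrightarrow> (\<exists>E :: (('f, nat) trm \<times> ('f, nat) trm) set.
     (\<forall>(s, t)\<in>E. wf_trm ar s \<and> wf_trm ar t) \<and>
     V = {A. is_algebra ar A \<and> (\<forall>(s, t)\<in>E. satisfies A s t)})"

definition congruence :: "('f \<Rightarrow> nat) \<Rightarrow> ('f, 'a) alg \<Rightarrow> 'a rel \<Rightarrow> bool" where
  "congruence ar A \<theta> \<longleftrightarrow> equiv (carrier A) \<theta> \<and>
     (\<forall>f xs ys. length xs = ar f \<and> length ys = ar f \<and>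
        set xs \<subseteq> carrier A \<and> set ys \<subseteq> carrier A \<and>
        list_all2 (\<lambda>x y. (x, y) \<in> \<theta>) xs ys \<longrightarrow> (ops A f xs, ops A f ys) \<in> \<theta>)"

text \<open>altc X Y m = X o Y o X o ... with m factors (m >= 1); O is relational
  composition (a,c) in X O Y iff exists b. (a,b) in X and (b,c) in Y.\<close>
fun altc :: "'a rel \<Rightarrow> 'a rel \<Rightarrow> nat \<Rightarrow> 'a rel" where
  "altc X Y 0 = Id"
| "altc X Y (Suc 0) = X"
| "altc X Y (Suc (Suc k)) = X O altc Y X (Suc k)"

definition mk_modular :: "('f \<Rightarrow> nat) \<Rightarrow> ('f, 'a) alg set \<Rightarrow> nat \<Rightarrow> nat \<Rightarrow> bool" where
  "mk_modular ar V m k \<longleftrightarrow> (\<forall>A\<in>V. \<forall>\<alpha> \<beta> \<gamma>.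
     congruence ar A \<alpha> \<and> congruence ar A \<beta> \<and> congruence ar A \<gamma> \<longrightarrow>
     \<alpha> \<inter> altc \<beta> (\<alpha> \<inter> \<gamma>) m \<subseteq> altc (\<alpha> \<inter> \<beta>) (\<alpha> \<inter> \<gamma>) k)"

text \<open>Ternary terms use variables 0, 1, 2 (for x, y, z); top3 A t a b c is the
  ternary term operation of t in A applied to a, b, c.\<close>
definition ternary :: "('f \<Rightarrow> nat) \<Rightarrow> ('f, nat) trm \<Rightarrow> bool" where
  "ternary ar t \<longleftrightarrow> wf_trm ar t \<and> vars_trm t \<subseteq> {0, 1, 2}"

definition top3 :: "('f, 'a) alg \<Rightarrow> ('f, nat) trm \<Rightarrow> 'a \<Rightarrow> 'a \<Rightarrow> 'a \<Rightarrow> 'a" where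
  "top3 A t a b c = eval A (\<lambda>v. if v = 0 then a else if v = 1 then b else c) t"

text \<open>V has n+2 Gumm terms p, j_1, ..., j_{n+1}.\<close>
definition has_gumm_terms :: "('f \<Rightarrow> nat) \<Rightarrow> ('f, 'a) alg set \<Rightarrow> nat \<Rightarrow> bool" where
  "has_gumm_terms ar V n \<longleftrightarrow> (\<exists>(p :: ('f, nat) trm) (j :: nat \<Rightarrow> ('f, nat) trm).
     ternary ar p \<and> (\<forall>i\<in>{1..n+1}. ternary ar (j i)) \<and>
     (\<forall>A\<in>V. \<forall>x\<in>carrier A. \<forall>y\<in>carrier A. \<forall>z\<in>carrier A.
        (\<forall>i\<in>{1..n+1}. x = top3 A (j i) x y x) \<and>
        x = top3 A p x z z \<and>
        top3 A p x x z = top3 A (j 1) x x z \<and>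
        (\<forall>i\<in>{1..n}. odd i \<longrightarrow> top3 A (j i) x z z = top3 A (j (i+1)) x z z) \<and>
        (\<forall>i\<in>{1..n}. even i \<longrightarrow> top3 A (j i) x x z = top3 A (j (i+1)) x x z) \<and>
        top3 A (j (n+1)) x y z = z))"

end

theory Submission
  imports Defs
begin

text \<open>Every class of algebras is (2,2)-modular, and (m,k)-modularity with m odd and k even passes
  to (m+1,k): the extra trailing \<open>\<alpha>\<gamma>\<close>-step is absorbed into the last step of the
  \<open>\<alpha>\<beta>\<close>/\<open>\<alpha>\<gamma>\<close>-chain. Gumm terms turn (L,k)-modularity into (2L-1, k+(2L-2)n)-modularity.
  Let x \<open>\<alpha>\<close> z be joined by a \<open>\<beta>\<close>/\<open>\<alpha>\<gamma>\<close>-chain z = c_0, ..., c_M = x with M = 2L-1.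
  Folding it in half, the elements p(z, c_t, c_(M-t)) form a chain of length L from p(z,z,x) to
  p(z, c_L, c_L) = z, and p(z,z,x) = j_1(z,z,x) \<open>\<alpha>\<close> j_1(z,z,z) = z, so (L,k)-modularity joins
  p(z,z,x) to z by an \<open>\<alpha>\<beta>\<close>/\<open>\<alpha>\<gamma>\<close>-chain of length k. Applying j_i(z,-,x) to the original
  chain gives chains of length M from j_i(z,z,x) to j_i(z,x,x) inside the \<open>\<alpha>\<close>-class of z, since
  j_i(z,y,x) \<open>\<alpha>\<close> j_i(z,y,z) = z; the Gumm identities link them into a chain from p(z,z,x) to x.
  Starting from (3, 2n+2), iterating L \<open>\<mapsto>\<close> 2L-1 gives part (i), and alternating it with
  m \<open>\<mapsto>\<close> m+1 gives part (ii).\<close>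

lemma congruence_in_carrier:
  "congruence ar A \<theta> \<Longrightarrow> (a, b) \<in> \<theta> \<Longrightarrow> a \<in> carrier A \<and> b \<in> carrier A"
  unfolding congruence_def equiv_def refl_on_def by blast

lemma congruence_refl: "congruence ar A \<theta> \<Longrightarrow> a \<in> carrier A \<Longrightarrow> (a, a) \<in> \<theta>"
  unfolding congruence_def equiv_def refl_on_def by blast

lemma congruence_sym: "congruence ar A \<theta> \<Longrightarrow> sym \<theta>"
  unfolding congruence_def equiv_def by blast

lemma congruence_trans: "congruence ar A \<theta> \<Longrightarrow> trans \<theta>"
  unfolding congruence_def equiv_def by blast

lemma congruence_Int:
  assumes "congruence ar A \<theta>" "congruence ar A \<theta>'"
  shows "congruence ar A (\<theta> \<inter> \<theta>')"
proof -
  have "equiv (carrier A) (\<theta> \<inter> \<theta>')"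
    using assms unfolding congruence_def equiv_def refl_on_def sym_def trans_def by blast
  moreover have "list_all2 (\<lambda>x y. (x, y) \<in> \<theta>) xs ys \<and> list_all2 (\<lambda>x y. (x, y) \<in> \<theta>') xs ys"
    if "list_all2 (\<lambda>x y. (x, y) \<in> \<theta> \<inter> \<theta>') xs ys" for xs ys
    using that by (auto elim: list_all2_mono)
  ultimately show ?thesis
    using assms unfolding congruence_def by blast
qed

lemma eval_in_carrier:
  assumes "is_algebra ar A" "\<And>v. \<rho> v \<in> carrier A" "wf_trm ar t"
  shows "eval A \<rho> t \<in> carrier A"
  using assms(3)
proof (induction t)
  case (Fun f ts)
  then have "set (map (eval A \<rho>) ts) \<subseteq> carrier A" by auto
  with Fun.prems assms(1) show ?case unfolding is_algebra_def by simp
qed (simp add: assms(2))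

lemma eval_congruence:
  assumes "is_algebra ar A" "congruence ar A \<theta>" "\<And>v. (\<rho> v, \<rho>' v) \<in> \<theta>" "wf_trm ar t"
  shows "(eval A \<rho> t, eval A \<rho>' t) \<in> \<theta>"
  using assms(4)
proof (induction t)
  case (Fun f ts)
  have "\<rho> v \<in> carrier A" "\<rho>' v \<in> carrier A" for v
    using congruence_in_carrier[OF assms(2,3)] by auto
  then have "set (map (eval A \<rho>) ts) \<subseteq> carrier A" "set (map (eval A \<rho>') ts) \<subseteq> carrier A"
    using Fun.prems by (auto intro: eval_in_carrier[OF assms(1)])
  moreover have "list_all2 (\<lambda>x y. (x, y) \<in> \<theta>) (map (eval A \<rho>) ts) (map (eval A \<rho>') ts)"
    using Fun by (simp add: list_all2_map1 list_all2_map2 list_all2_same)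
  ultimately show ?case
    using assms(2) Fun.prems unfolding congruence_def by simp
qed (simp add: assms(3))

lemma top3_in_carrier:
  "is_algebra ar A \<Longrightarrow> wf_trm ar t \<Longrightarrow> a \<in> carrier A \<Longrightarrow> b \<in> carrier A \<Longrightarrow> c \<in> carrier A
    \<Longrightarrow> top3 A t a b c \<in> carrier A"
  unfolding top3_def by (rule eval_in_carrier) auto

lemma top3_congruence:
  assumes "is_algebra ar A" "congruence ar A \<theta>" "wf_trm ar t"
    and "(a, a') \<in> \<theta>" "(b, b') \<in> \<theta>" "(c, c') \<in> \<theta>"
  shows "(top3 A t a b c, top3 A t a' b' c') \<in> \<theta>"
  unfolding top3_def using assms by (intro eval_congruence) auto

lemma altc_Suc: "altc X Y (Suc m) = X O altc Y X m"
  by (cases m) simp_all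

lemma altc_add: "altc X Y (m + m') = altc X Y m O (if even m then altc X Y m' else altc Y X m')"
  by (induction m arbitrary: X Y) (simp_all add: altc_Suc O_assoc)

lemma altc_Suc_right: "altc X Y (Suc m) = altc X Y m O (if even m then X else Y)"
  using altc_add[of X Y m 1] by simp

lemma converse_altc:
  assumes "sym X" "sym Y"
  shows "(altc X Y m)\<inverse> = (if even m then altc Y X m else altc X Y m)"
  using assms
proof (induction m arbitrary: X Y)
  case (Suc m)
  have "(altc X Y (Suc m))\<inverse> = (altc Y X m)\<inverse> O X"
    using Suc.prems by (simp add: altc_Suc converse_relcomp sym_conv_converse_eq)
  also have "\<dots> = (if even m then altc X Y m else altc Y X m) O X"
    using Suc by simp
  also have "\<dots> = (if even (Suc m) then altc Y X (Suc m) else altc X Y (Suc m))"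
    by (simp add: altc_Suc_right)
  finally show ?case .
qed simp

lemma altc_relcomp_odd:
  assumes "odd m" "trans X" "1 \<le> m'"
  shows "altc X Y m O altc X Y m' \<subseteq> altc X Y (m + m' - 1)"
proof -
  obtain l where m: "m = Suc l" "even l"
    using assms(1) by (cases m) auto
  obtain l' where m': "m' = Suc l'"
    using assms(3) by (cases m') auto
  have "altc X Y m O altc X Y m' = altc X Y l O (X O X) O altc Y X l'"
    using m by (simp add: m' altc_Suc_right[of X Y l] altc_Suc[of X Y l'] O_assoc)
  also have "\<dots> \<subseteq> altc X Y l O X O altc Y X l'"
    using trans_O_subset[OF assms(2)] by (intro relcomp_mono) auto
  also have "\<dots> = altc X Y (m + m' - 1)"
    using m m' altc_add[of X Y l "Suc l'"] by (simp add: altc_Suc[of X Y l'] O_assoc)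
  finally show ?thesis .
qed

lemma altc_relcomp_even_trans:
  assumes "even k" "2 \<le> k" "trans Y"
  shows "altc X Y k O Y \<subseteq> altc X Y k"
proof -
  obtain l where k: "k = Suc l" "odd l"
    using assms by (cases k) auto
  have "altc X Y k O Y = altc X Y l O (Y O Y)"
    using k by (simp add: altc_Suc_right O_assoc)
  also have "\<dots> \<subseteq> altc X Y l O Y"
    using trans_O_subset[OF assms(3)] by (intro relcomp_mono) auto
  also have "\<dots> = altc X Y k"
    using k by (simp add: altc_Suc_right)
  finally show ?thesis .
qed

lemma altc_image:
  assumes "\<And>a b. (a, b) \<in> X \<Longrightarrow> (g a, g b) \<in> X'" "\<And>a b. (a, b) \<in> Y \<Longrightarrow> (g a, g b) \<in> Y'"
    and "(a, b) \<in> altc X Y m"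
  shows "(g a, g b) \<in> altc X' Y' m"
  using assms
proof (induction m arbitrary: X Y X' Y' a)
  case (Suc m)
  then obtain c where "(a, c) \<in> X" "(c, b) \<in> altc Y X m"
    by (auto simp: altc_Suc)
  with Suc have "(g a, g c) \<in> X'" "(g c, g b) \<in> altc Y' X' m"
    by blast+
  then show ?case
    by (auto simp: altc_Suc)
qed simp

lemma altc_chain:
  assumes "odd M" "trans X" "(w 0, w 0) \<in> X" "\<And>i. i < N \<Longrightarrow> (w i, w (Suc i)) \<in> altc X Y M"
  shows "(w 0, w N) \<in> altc X Y (N * (M - 1) + 1)"
  using assms(4)
proof (induction N)
  case (Suc N)
  have "odd (N * (M - 1) + 1)" "1 \<le> M"
    using assms(1) odd_pos[OF assms(1)] by simp_all
  moreover have "(w 0, w N) \<in> altc X Y (N * (M - 1) + 1)" "(w N, w (Suc N)) \<in> altc X Y M"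
    using Suc by simp_all
  ultimately have "(w 0, w (Suc N)) \<in> altc X Y (N * (M - 1) + 1 + M - 1)"
    using altc_relcomp_odd[OF _ assms(2), of "N * (M - 1) + 1" M Y] by blast
  moreover have "N * (M - 1) + 1 + M - 1 = Suc N * (M - 1) + 1"
    using odd_pos[OF assms(1)] by simp
  ultimately show ?case
    by (simp only:)
qed (use assms(3) in simp)

locale gumm_algebra =
  fixes ar :: "'f \<Rightarrow> nat" and A :: "('f, 'a) alg" and n :: nat
    and p :: "('f, nat) trm" and j :: "nat \<Rightarrow> ('f, nat) trm"
  assumes algebra: "is_algebra ar A"
    and wf_p: "wf_trm ar p"
    and wf_j: "i \<in> {1..n+1} \<Longrightarrow> wf_trm ar (j i)"
    and j_xyx: "i \<in> {1..n+1} \<Longrightarrow> x \<in> carrier A \<Longrightarrow> y \<in> carrier A \<Longrightarrow> top3 A (j i) x y x = x"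
    and p_xzz: "x \<in> carrier A \<Longrightarrow> z \<in> carrier A \<Longrightarrow> top3 A p x z z = x"
    and p_xxz: "x \<in> carrier A \<Longrightarrow> z \<in> carrier A \<Longrightarrow> top3 A p x x z = top3 A (j 1) x x z"
    and j_xzz: "i \<in> {1..n} \<Longrightarrow> odd i \<Longrightarrow> x \<in> carrier A \<Longrightarrow> z \<in> carrier A
      \<Longrightarrow> top3 A (j i) x z z = top3 A (j (i+1)) x z z"
    and j_xxz: "i \<in> {1..n} \<Longrightarrow> even i \<Longrightarrow> x \<in> carrier A \<Longrightarrow> z \<in> carrier A
      \<Longrightarrow> top3 A (j i) x x z = top3 A (j (i+1)) x x z"
    and j_last: "x \<in> carrier A \<Longrightarrow> y \<in> carrier A \<Longrightarrow> z \<in> carrier A \<Longrightarrow> top3 A (j (n+1)) x y z = z"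

lemma has_gumm_terms_obtain_gumm_algebra:
  assumes "has_gumm_terms ar V n" "\<And>A. A \<in> V \<Longrightarrow> is_algebra ar A"
  obtains p j where "\<And>A. A \<in> V \<Longrightarrow> gumm_algebra ar A n p j"
proof -
  from assms(1) obtain p j where "ternary ar p" "\<forall>i\<in>{1..n+1}. ternary ar (j i)"
    and "\<forall>A\<in>V. \<forall>x\<in>carrier A. \<forall>y\<in>carrier A. \<forall>z\<in>carrier A.
        (\<forall>i\<in>{1..n+1}. x = top3 A (j i) x y x) \<and> x = top3 A p x z z \<and>
        top3 A p x x z = top3 A (j 1) x x z \<and>
        (\<forall>i\<in>{1..n}. odd i \<longrightarrow> top3 A (j i) x z z = top3 A (j (i+1)) x z z) \<and>
        (\<forall>i\<in>{1..n}. even i \<longrightarrow> top3 A (j i) x x z = top3 A (j (i+1)) x x z) \<and>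
        top3 A (j (n+1)) x y z = z"
    unfolding has_gumm_terms_def by blast
  with assms(2) show thesis
    by (intro that[of p j], unfold_locales) (simp_all add: ternary_def)
qed

context gumm_algebra
begin

lemma altc_fold:
  assumes "congruence ar A R" "congruence ar A S" "u \<in> carrier A"
    and "(a, c) \<in> altc R S (2 * h + 1)"
  shows "(top3 A p u a c, u) \<in> altc R S (Suc h)"
  using assms
proof (induction h arbitrary: R S a c)
  case 0
  then have "(a, c) \<in> R"
    by simp
  then have "c \<in> carrier A"
    using congruence_in_carrier[OF 0(1)] by blast
  then have "(top3 A p u a c, top3 A p u c c) \<in> R"
    using 0 by (intro top3_congruence[OF algebra _ wf_p]) (auto intro: congruence_refl)
  with \<open>c \<in> carrier A\<close> show ?case
    using p_xzz[OF 0(3)] by simp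
next
  case (Suc h)
  have "altc R S (2 * Suc h + 1) = R O altc S R (2 * h + 1) O R"
    using altc_Suc[of R S "Suc (2 * h + 1)"] altc_Suc_right[of S R "2 * h + 1"] by simp
  then obtain a' c' where "(a, a') \<in> R" "(a', c') \<in> altc S R (2 * h + 1)" "(c', c) \<in> R"
    using Suc.prems(4) by blast
  have "(top3 A p u a c, top3 A p u a' c') \<in> R"
    using Suc.prems \<open>(a, a') \<in> R\<close> \<open>(c', c) \<in> R\<close> congruence_sym[OF Suc.prems(1)]
    by (intro top3_congruence[OF algebra _ wf_p]) (auto intro: congruence_refl dest: symD)
  moreover have "(top3 A p u a' c', u) \<in> altc S R (Suc h)"
    using Suc.IH Suc.prems \<open>(a', c') \<in> altc S R (2 * h + 1)\<close> by blast
  ultimately show ?case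
    by (auto simp: altc_Suc[of R S "Suc h"])
qed

lemma j_in_class:
  assumes "congruence ar A \<alpha>" "(z, x) \<in> \<alpha>" "y \<in> carrier A" "i \<in> {1..n+1}"
  shows "(top3 A (j i) z y x, z) \<in> \<alpha>"
proof -
  have "z \<in> carrier A"
    using congruence_in_carrier[OF assms(1,2)] by simp
  then have "(top3 A (j i) z y x, top3 A (j i) z y z) \<in> \<alpha>"
    using assms congruence_sym[OF assms(1)]
    by (intro top3_congruence[OF algebra _ wf_j]) (auto intro: congruence_refl dest: symD)
  with \<open>z \<in> carrier A\<close> show ?thesis
    using j_xyx assms(3,4) by simp
qed

lemma altc_j_segment:
  assumes "congruence ar A \<alpha>" "congruence ar A \<beta>" "congruence ar A Y"
    and "(z, x) \<in> \<alpha>" "(z, x) \<in> altc \<beta> Y M" "i \<in> {1..n+1}"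
  shows "(top3 A (j i) z z x, top3 A (j i) z x x) \<in> altc (\<alpha> \<inter> \<beta>) Y M"
proof -
  have zx: "z \<in> carrier A" "x \<in> carrier A"
    using congruence_in_carrier[OF assms(1,4)] by auto
  let ?g = "\<lambda>y. top3 A (j i) z y x"
  have "(?g a, ?g b) \<in> \<alpha> \<inter> \<beta>" if "(a, b) \<in> \<beta>" for a b
  proof
    show "(?g a, ?g b) \<in> \<beta>"
      using that zx assms(2,6) by (intro top3_congruence[OF algebra _ wf_j]) (auto intro: congruence_refl)
    have "(?g a, z) \<in> \<alpha>" "(?g b, z) \<in> \<alpha>"
      using j_in_class[OF assms(1,4) _ assms(6)] congruence_in_carrier[OF assms(2) that] by auto
    then show "(?g a, ?g b) \<in> \<alpha>"
      using congruence_sym[OF assms(1)] congruence_trans[OF assms(1)] by (blast dest: symD transD)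
  qed
  moreover have "(?g a, ?g b) \<in> Y" if "(a, b) \<in> Y" for a b
    using that zx assms(3,6) by (intro top3_congruence[OF algebra _ wf_j]) (auto intro: congruence_refl)
  ultimately show ?thesis
    using altc_image[OF _ _ assms(5), of ?g] by blast
qed

lemma altc_gumm_chain:
  assumes "congruence ar A \<alpha>" "congruence ar A \<beta>" "congruence ar A Y"
    and "(z, x) \<in> \<alpha>" "(z, x) \<in> altc \<beta> Y M" "odd M"
  shows "(top3 A p z z x, x) \<in> altc (\<alpha> \<inter> \<beta>) Y (n * (M - 1) + 1)"
proof -
  have zx: "z \<in> carrier A" "x \<in> carrier A"
    using congruence_in_carrier[OF assms(1,4)] by auto
  have X: "congruence ar A (\<alpha> \<inter> \<beta>)"
    using congruence_Int[OF assms(1,2)] .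
  note segment = altc_j_segment[OF assms(1-5)]
  define w where "w i = top3 A (j (i+1)) z (if even i then z else x) x" for i
  have "(w i, w (Suc i)) \<in> altc (\<alpha> \<inter> \<beta>) Y M" if "i < n" for i
  proof (cases "even i")
    case True
    then have "w (Suc i) = top3 A (j (i+1)) z x x"
      using j_xzz[of "i+1" z x] that zx by (simp add: w_def)
    then show ?thesis
      using segment[of "i+1"] True that by (simp add: w_def)
  next
    case False
    then have "w (Suc i) = top3 A (j (i+1)) z z x"
      using j_xxz[of "i+1" z x] that zx by (simp add: w_def)
    moreover have "(top3 A (j (i+1)) z x x, top3 A (j (i+1)) z z x) \<in> altc (\<alpha> \<inter> \<beta>) Y M"
      using segment[of "i+1"] that assms(6) converse_altc[of "\<alpha> \<inter> \<beta>" Y M]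
        congruence_sym[OF X] congruence_sym[OF assms(3)] by auto
    ultimately show ?thesis
      using False by (simp add: w_def)
  qed
  moreover have "(w 0, w 0) \<in> \<alpha> \<inter> \<beta>"
    using zx wf_j[of 1] by (intro congruence_refl[OF X]) (simp add: w_def top3_in_carrier[OF algebra])
  ultimately have "(w 0, w n) \<in> altc (\<alpha> \<inter> \<beta>) Y (n * (M - 1) + 1)"
    using altc_chain[OF assms(6) congruence_trans[OF X]] by blast
  moreover have "w 0 = top3 A p z z x" "w n = x"
    using zx p_xxz j_last by (simp_all add: w_def)
  ultimately show ?thesis
    by simp
qed

lemma altc_double:
  assumes "congruence ar A \<alpha>" "congruence ar A \<beta>" "congruence ar A \<gamma>"
    and modular: "\<alpha> \<inter> altc \<beta> (\<alpha> \<inter> \<gamma>) L \<subseteq> altc (\<alpha> \<inter> \<beta>) (\<alpha> \<inter> \<gamma>) k"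
    and "1 \<le> k" "1 \<le> L"
  shows "\<alpha> \<inter> altc \<beta> (\<alpha> \<inter> \<gamma>) (2 * L - 1) \<subseteq> altc (\<alpha> \<inter> \<beta>) (\<alpha> \<inter> \<gamma>) (k + n * (2 * L - 2))"
proof (rule subrelI)
  let ?X = "\<alpha> \<inter> \<beta>" and ?Y = "\<alpha> \<inter> \<gamma>" and ?M = "2 * L - 1"
  fix x z
  assume "(x, z) \<in> \<alpha> \<inter> altc \<beta> ?Y ?M"
  then have xz: "(x, z) \<in> \<alpha>" "(x, z) \<in> altc \<beta> ?Y ?M"
    by simp_all
  have X: "congruence ar A ?X" and Y: "congruence ar A ?Y"
    using congruence_Int assms(1-3) by blast+
  have M: "odd ?M" "?M = 2 * (L - 1) + 1"
    using assms(6) by presburger+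
  have zx: "(z, x) \<in> \<alpha>" "(z, x) \<in> altc \<beta> ?Y ?M"
    using xz M(1) congruence_sym[OF assms(1)] congruence_sym[OF assms(2)] congruence_sym[OF Y]
      converse_altc[of \<beta> ?Y ?M] by (auto dest: symD)
  have z: "z \<in> carrier A"
    using congruence_in_carrier[OF assms(1) xz(1)] by simp
  have "(top3 A p z z x, z) \<in> altc \<beta> ?Y L"
    using altc_fold[OF assms(2) Y z, of z x "L - 1"] zx(2) M(2) assms(6) by simp
  moreover have "(top3 A p z z x, z) \<in> \<alpha>"
    using j_in_class[OF assms(1) zx(1) z, of 1] p_xxz[OF z] congruence_in_carrier[OF assms(1) xz(1)]
    by simp
  ultimately have "(top3 A p z z x, z) \<in> altc ?X ?Y k"
    using modular by blast
  moreover have "(x, top3 A p z z x) \<in> altc ?X ?Y (n * (?M - 1) + 1)"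
    using altc_gumm_chain[OF assms(1,2) Y zx M(1)] converse_altc[of ?X ?Y "n * (?M - 1) + 1"]
      congruence_sym[OF X] congruence_sym[OF Y] M(1) by auto
  ultimately have "(x, z) \<in> altc ?X ?Y (n * (?M - 1) + 1 + k - 1)"
    using altc_relcomp_odd[OF _ congruence_trans[OF X] assms(5), of "n * (?M - 1) + 1" ?Y] M(1)
    by auto
  moreover have "n * (?M - 1) + 1 + k - 1 = k + n * (2 * L - 2)"
    by (simp add: numeral_2_eq_2)
  ultimately show "(x, z) \<in> altc ?X ?Y (k + n * (2 * L - 2))"
    by (simp only:)
qed

end

lemma mk_modular_2_2:
  fixes V :: "('f, 'a) alg set"
  shows "mk_modular ar V 2 2"
  unfolding mk_modular_def
proof (intro ballI allI impI subrelI)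
  fix A :: "('f, 'a) alg" and \<alpha> \<beta> \<gamma> x z
  assume "congruence ar A \<alpha> \<and> congruence ar A \<beta> \<and> congruence ar A \<gamma>"
    and "(x, z) \<in> \<alpha> \<inter> altc \<beta> (\<alpha> \<inter> \<gamma>) 2"
  moreover obtain y where "(x, z) \<in> \<alpha>" "(x, y) \<in> \<beta>" "(y, z) \<in> \<alpha> \<inter> \<gamma>"
    using calculation(2) by (auto simp: numeral_2_eq_2)
  ultimately have "(x, y) \<in> \<alpha>"
    using congruence_sym congruence_trans by (blast dest: symD transD)
  with \<open>(x, y) \<in> \<beta>\<close> \<open>(y, z) \<in> \<alpha> \<inter> \<gamma>\<close> show "(x, z) \<in> altc (\<alpha> \<inter> \<beta>) (\<alpha> \<inter> \<gamma>) 2"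
    by (auto simp: numeral_2_eq_2)
qed

lemma mk_modular_Suc:
  assumes "mk_modular ar V m k" "odd m" "even k" "2 \<le> k"
  shows "mk_modular ar V (Suc m) k"
  unfolding mk_modular_def
proof (intro ballI allI impI subrelI)
  fix A \<alpha> \<beta> \<gamma> x z
  assume "A \<in> V" and cong: "congruence ar A \<alpha> \<and> congruence ar A \<beta> \<and> congruence ar A \<gamma>"
    and xz: "(x, z) \<in> \<alpha> \<inter> altc \<beta> (\<alpha> \<inter> \<gamma>) (Suc m)"
  then obtain y where y: "(x, y) \<in> altc \<beta> (\<alpha> \<inter> \<gamma>) m" "(y, z) \<in> \<alpha> \<inter> \<gamma>"
    using assms(2) by (auto simp: altc_Suc_right)
  have "(x, y) \<in> \<alpha>"
    using xz y(2) cong congruence_sym congruence_trans by (blast dest: symD transD)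
  with y(1) have "(x, y) \<in> altc (\<alpha> \<inter> \<beta>) (\<alpha> \<inter> \<gamma>) k"
    using assms(1) \<open>A \<in> V\<close> cong unfolding mk_modular_def by blast
  with y(2) have "(x, z) \<in> altc (\<alpha> \<inter> \<beta>) (\<alpha> \<inter> \<gamma>) k O (\<alpha> \<inter> \<gamma>)"
    by blast
  then show "(x, z) \<in> altc (\<alpha> \<inter> \<beta>) (\<alpha> \<inter> \<gamma>) k"
    using altc_relcomp_even_trans[OF assms(3,4) congruence_trans[OF congruence_Int]] cong by blast
qed

lemma mk_modular_double:
  assumes "\<And>A. A \<in> V \<Longrightarrow> is_algebra ar A" "has_gumm_terms ar V n"
    and "mk_modular ar V L k" "1 \<le> k" "1 \<le> L"
  shows "mk_modular ar V (2 * L - 1) (k + n * (2 * L - 2))"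
proof -
  obtain p j where "\<And>A. A \<in> V \<Longrightarrow> gumm_algebra ar A n p j"
    using has_gumm_terms_obtain_gumm_algebra assms(1,2) by blast
  then show ?thesis
    using gumm_algebra.altc_double assms(3-5) unfolding mk_modular_def by blast
qed

lemma mk_modular_pow_plus_1:
  assumes "\<And>A. A \<in> V \<Longrightarrow> is_algebra ar A" "has_gumm_terms ar V n" "1 \<le> q"
  shows "mk_modular ar V (2^q + 1) ((2^(q+1) - 2) * n + 2)"
  using assms(3)
proof (induction q rule: dec_induct)
  case base
  show ?case
    using mk_modular_double[OF assms(1,2) mk_modular_2_2] by (simp add: mult.commute)
next
  case (step q)
  obtain b where b: "(2::nat)^(q+1) = b + 2"
    using le_Suc_ex[of 2 "2^(q+1)"] by (auto simp: add.commute)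
  have "mk_modular ar V (2 * (2^q + 1) - 1) ((2^(q+1) - 2) * n + 2 + n * (2 * (2^q + 1) - 2))"
    using mk_modular_double[OF assms(1,2) step.IH] by simp
  moreover have "(2^(q+1) - 2) * n + 2 + n * (2 * (2^q + 1) - 2) = (2^(Suc q+1) - 2) * n + 2"
    using b by (simp add: algebra_simps)
  ultimately show ?case
    by simp
qed

lemma mk_modular_pow_minus_1:
  assumes "\<And>A. A \<in> V \<Longrightarrow> is_algebra ar A" "has_gumm_terms ar V n" "2 \<le> q"
  shows "mk_modular ar V (2^q - 1) ((2^(q+1) - 2*q - 2) * n + 2)"
  using assms(3)
proof (induction q rule: dec_induct)
  case base
  show ?case
    using mk_modular_double[OF assms(1,2) mk_modular_2_2] by (simp add: mult.commute)
next
  case (step q)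
  define c where "c = (2::nat)^(q+1) - 2*q - 2"
  have "2*q + 2 \<le> (2::nat) * 2^q"
    using less_exp[of q] by linarith
  then have c: "(2::nat)^(q+1) = c + 2*q + 2"
    unfolding c_def by simp
  have "even (c + 2*q + 2)"
    unfolding c[symmetric] by simp
  then have "even c"
    by simp
  then have "mk_modular ar V (Suc (2^q - 1)) (c * n + 2)"
    using mk_modular_Suc[OF step.IH[folded c_def]] step.hyps by simp
  then have "mk_modular ar V (2 * 2^q - 1) (c * n + 2 + n * (2 * 2^q - 2))"
    by (intro mk_modular_double[OF assms(1,2)]) simp_all
  moreover have "c * n + 2 + n * (2 * 2^q - 2) = (2^(Suc q+1) - 2 * Suc q - 2) * n + 2"
    using c by (simp add: algebra_simps)
  ultimately show ?case
    by simp
qed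

theorem theorem4p8:
  fixes ar :: "'f \<Rightarrow> nat" and V :: "('f, 'a) alg set" and n :: nat
  assumes "variety ar V"
    and "has_gumm_terms ar V n"
  shows "(\<forall>q\<ge>1. mk_modular ar V (2^q + 1) ((2^(q+1) - 2) * n + 2)) \<and>
         (\<forall>q\<ge>2. mk_modular ar V (2^q - 1) ((2^(q+1) - 2*q - 2) * n + 2))"
proof -
  have "\<And>A. A \<in> V \<Longrightarrow> is_algebra ar A"
    using assms(1) unfolding variety_def by blast
  then show ?thesis
    using mk_modular_pow_plus_1 mk_modular_pow_minus_1 assms(2) by blast
qed

end
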